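(* Let $L\cong\mathbf{2}^n$ be a Boolean lattice and let $R_L\cong\prod_{1}^{n}\mathbb{Z}_2$ be the Boolean ring associated with $L$ (multiplication corresponding to meet). Then $\mathrm{Incomp}(L)=AG(R_L)$.
   Context: For a bounded lattice $L$, the incomparability graph $\mathrm{Incomp}(L)$ has vertex set $L\setminus\{0,1\}$, with distinct $a,b$ adjacent iff $a$ and $b$ are incomparable. For a commutative ring $R$ with identity, $\mathrm{ann}(a)=\{x\in R: xa=0\}$, $Z(R)$ is the set of zero-divisors, and the annihilator graph $AG(R)$ has vertex set $Z(R)\setminus\{0\}$, with distinct $x,y$ adjacent iff $\mathrm{ann}(xy)\neq\mathrm{ann}(x)\cup\mathrm{ann}(y)$. The Boolean ring $R_L$ has underlying set $L$ with product $ab=a\wedge b$ (and sum the symmetric difference), so $\mathrm{ann}(a)$ is the principal ideal generated by the complement of $a$. *)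

theory Defs
  imports Main "HOL-Algebra.Ring"
begin

text \<open>Simple graphs are represented as a pair (vertex set, adjacency relation),
  where the adjacency relation only relates distinct vertices of the vertex set.\<close>

definition Incomp :: "('a::bounded_lattice) set \<times> ('a \<Rightarrow> 'a \<Rightarrow> bool)" where
  "Incomp = (UNIV - {bot, Orderings.top},
     (\<lambda>a b. a \<in> UNIV - {bot, Orderings.top} \<and> b \<in> UNIV - {bot, Orderings.top} \<and> a \<noteq> b
            \<and> \<not> a \<le> b \<and> \<not> b \<le> a))"

definition ann :: "('a, 'b) ring_scheme \<Rightarrow> 'a \<Rightarrow> 'a set" where
  "ann R a = {x \<in> carrier R. x \<otimes>\<^bsub>R\<^esub> a = \<zero>\<^bsub>R\<^esub>}"

definition zero_divisors :: "('a, 'b) ring_scheme \<Rightarrow> 'a set" where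
  "zero_divisors R = {x \<in> carrier R. \<exists>y \<in> carrier R. y \<noteq> \<zero>\<^bsub>R\<^esub> \<and> x \<otimes>\<^bsub>R\<^esub> y = \<zero>\<^bsub>R\<^esub>}"

definition AG :: "('a, 'b) ring_scheme \<Rightarrow> 'a set \<times> ('a \<Rightarrow> 'a \<Rightarrow> bool)" where
  "AG R = (zero_divisors R - {\<zero>\<^bsub>R\<^esub>},
     (\<lambda>x y. x \<in> zero_divisors R - {\<zero>\<^bsub>R\<^esub>} \<and> y \<in> zero_divisors R - {\<zero>\<^bsub>R\<^esub>} \<and> x \<noteq> y
            \<and> ann R (x \<otimes>\<^bsub>R\<^esub> y) \<noteq> ann R x \<union> ann R y))"

definition boolean_ring :: "('a::boolean_algebra) ring" where
  "boolean_ring = \<lparr>carrier = UNIV, mult = inf, one = Orderings.top,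
      zero = bot, add = (\<lambda>x y. sup (inf x (- y)) (inf (- x) y))\<rparr>"

end

theory Submission
  imports Defs
begin

text \<open>In the Boolean ring the annihilator of \<open>a\<close> is the down-set of \<open>- a\<close>. Hence the
  nonzero zero-divisors are exactly the elements other than \<open>\<bottom>\<close> and \<open>\<top>\<close>, and
  \<open>ann (a b) = ann a \<union> ann b\<close> says \<open>{..- a \<squnion> - b} = {..- a} \<union> {..- b}\<close>; a principal
  down-set of a join splits as the union of the two down-sets only when the two joinands
  are comparable, i.e.\ when \<open>a\<close> and \<open>b\<close> are.\<close>

lemma atMost_sup_eq_Un_iff:
  fixes a b :: "'a::lattice"
  shows "{..sup a b} = {..a} \<union> {..b} \<longleftrightarrow> a \<le> b \<or> b \<le> a"
proof
  assume "{..sup a b} = {..a} \<union> {..b}"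
  then have "sup a b \<le> a \<or> sup a b \<le> b"
    by blast
  then show "a \<le> b \<or> b \<le> a"
    by (auto simp: le_sup_iff)
next
  assume "a \<le> b \<or> b \<le> a"
  then show "{..sup a b} = {..a} \<union> {..b}"
    by (auto simp: sup_absorb1 sup_absorb2)
qed

lemma carrier_boolean_ring [simp]: "carrier boolean_ring = UNIV"
  by (simp add: boolean_ring_def)

lemma mult_boolean_ring [simp]: "x \<otimes>\<^bsub>boolean_ring\<^esub> y = inf x y"
  by (simp add: boolean_ring_def)

lemma zero_boolean_ring [simp]: "\<zero>\<^bsub>boolean_ring\<^esub> = bot"
  by (simp add: boolean_ring_def)

lemma ann_boolean_ring: "ann boolean_ring x = {..- x}"
  by (auto simp: ann_def inf_shunt)

lemma zero_divisors_boolean_ring: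
  "zero_divisors (boolean_ring :: 'a::boolean_algebra ring) = - {Orderings.top}"
proof -
  have "(\<exists>y. y \<noteq> bot \<and> inf x y = bot) \<longleftrightarrow> x \<noteq> Orderings.top" for x :: 'a
  proof
    assume "\<exists>y. y \<noteq> bot \<and> inf x y = bot"
    then show "x \<noteq> Orderings.top"
      by auto
  next
    assume "x \<noteq> Orderings.top"
    then have "- x \<noteq> bot \<and> inf x (- x) = bot"
      by (metis compl_bot_eq double_compl inf_compl_bot)
    then show "\<exists>y. y \<noteq> bot \<and> inf x y = bot" ..
  qed
  then show ?thesis
    by (auto simp: zero_divisors_def)
qed

lemma ann_mult_boolean_ring_eq_Un_iff:
  fixes x y :: "'a::boolean_algebra"
  shows "ann boolean_ring (x \<otimes>\<^bsub>boolean_ring\<^esub> y) = ann boolean_ring x \<union> ann boolean_ring y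
    \<longleftrightarrow> x \<le> y \<or> y \<le> x"
  unfolding ann_boolean_ring mult_boolean_ring compl_inf atMost_sup_eq_Un_iff
  by auto

theorem mainTheorem9:
  shows "(Incomp :: ('a::{finite, boolean_algebra}) set \<times> ('a \<Rightarrow> 'a \<Rightarrow> bool))
           = AG (boolean_ring :: 'a ring)"
proof -
  have vertices: "zero_divisors (boolean_ring :: 'a ring) - {\<zero>\<^bsub>boolean_ring\<^esub>}
      = UNIV - {bot, Orderings.top}"
    by (auto simp: zero_divisors_boolean_ring)
  show ?thesis
    unfolding Incomp_def AG_def vertices ann_mult_boolean_ring_eq_Un_iff
    by simp
qed

end
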